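(* If $q=1$, the unique optimal solution is the profile in which all users choose DP (i.e., $u_i=n_i$ and $v_i=0$ for all $i\in[m]$). If $q=0$, a pure strategy profile is optimal if and only if $|y_i-y_j|\le 1$ for all $i,j\in[m]$, where $y_i=u_i+v_i$.
   Context: Network model: there are $m\ge 2$ source nodes $s_1,\dots,s_m$ and one destination $d$. Source $s_i$ has a set $N_i$ of $n_i$ users. Each user generates an independent Poisson flow of packets of rate $\phi>0$; each direct link $(s_i,d)$ has service rate $\mu>0$; each sidelink loses packets independently with probability $q\in[0,1]$, and $\bar q=1-q$. A pure strategy of a user in $N_i$ is either the direct path (DP) $(s_i,d)$ or an indirect path (IP) $(s_i,s_j,d)$, $j\neq i$. For a pure profile, $u_i$ is the number of users of $N_i$ choosing DP and $v_i$ the number of users of other sources choosing an IP $(s_j,s_i,d)$. With $T_i=u_i\phi+v_i\bar q\phi$, the total traffic rate is $TR=\sum_i\frac{\mu T_i}{T_i+\mu}$; an optimal solution is a pure profile maximizing $TR$. *)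

theory Defs
  imports Complex_Main
begin

text \<open>Sources are indexed by 0..<m; source i has users 0..<n i.
  A pure profile is sigma :: nat => nat => nat: sigma i k is the source whose
  direct link user k of source i uses; sigma i k = i means the direct path (DP),
  sigma i k = j (j \<noteq> i) means the indirect path (s_i, s_j, d).\<close>

definition valid_profile :: "nat \<Rightarrow> (nat \<Rightarrow> nat) \<Rightarrow> (nat \<Rightarrow> nat \<Rightarrow> nat) \<Rightarrow> bool" where
  "valid_profile m n \<sigma> \<longleftrightarrow> (\<forall>i<m. \<forall>k<n i. \<sigma> i k < m)"

definition u_cnt :: "(nat \<Rightarrow> nat) \<Rightarrow> (nat \<Rightarrow> nat \<Rightarrow> nat) \<Rightarrow> nat \<Rightarrow> nat" where
  "u_cnt n \<sigma> i = card {k. k < n i \<and> \<sigma> i k = i}"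

definition v_cnt :: "nat \<Rightarrow> (nat \<Rightarrow> nat) \<Rightarrow> (nat \<Rightarrow> nat \<Rightarrow> nat) \<Rightarrow> nat \<Rightarrow> nat" where
  "v_cnt m n \<sigma> i = card {(j, k). j < m \<and> j \<noteq> i \<and> k < n j \<and> \<sigma> j k = i}"

definition load :: "real \<Rightarrow> real \<Rightarrow> nat \<Rightarrow> (nat \<Rightarrow> nat) \<Rightarrow> (nat \<Rightarrow> nat \<Rightarrow> nat) \<Rightarrow> nat \<Rightarrow> real" where
  "load q \<phi> m n \<sigma> i = real (u_cnt n \<sigma> i) * \<phi> + real (v_cnt m n \<sigma> i) * (1 - q) * \<phi>"

definition TR :: "real \<Rightarrow> real \<Rightarrow> real \<Rightarrow> nat \<Rightarrow> (nat \<Rightarrow> nat) \<Rightarrow> (nat \<Rightarrow> nat \<Rightarrow> nat) \<Rightarrow> real" where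
  "TR q \<phi> \<mu> m n \<sigma> = (\<Sum>i<m. \<mu> * load q \<phi> m n \<sigma> i / (load q \<phi> m n \<sigma> i + \<mu>))"

definition optimal :: "real \<Rightarrow> real \<Rightarrow> real \<Rightarrow> nat \<Rightarrow> (nat \<Rightarrow> nat) \<Rightarrow> (nat \<Rightarrow> nat \<Rightarrow> nat) \<Rightarrow> bool" where
  "optimal q \<phi> \<mu> m n \<sigma> \<longleftrightarrow> valid_profile m n \<sigma> \<and>
     (\<forall>\<tau>. valid_profile m n \<tau> \<longrightarrow> TR q \<phi> \<mu> m n \<tau> \<le> TR q \<phi> \<mu> m n \<sigma>)"

end

theory Submission
  imports Defs
begin

text \<open>
  A link carrying \<open>y\<close> unattenuated flows contributes \<open>g y = \<mu> y \<phi> / (y \<phi> + \<mu>)\<close> to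
  \<open>TR\<close>, and \<open>g\<close> is strictly increasing with strictly decreasing increments.
  For \<open>q = 1\<close> only direct users count, so a user on an indirect path strictly gains
  by switching to its own direct link, while all-direct attains \<open>g (n i)\<close>, the maximum,
  on every link.
  For \<open>q = 0\<close> every user counts fully on the link it uses, so the loads \<open>y i\<close> are a
  distribution of the fixed total \<open>\<Sum> n i\<close> over the links. Moving one user from a link
  of load at least \<open>y + 2\<close> to one of load \<open>y\<close> strictly increases \<open>TR\<close>, by strict
  concavity. Conversely, if all loads lie in \<open>{a, a + 1}\<close>, then \<open>g\<close> meets the chord through
  \<open>a\<close> and \<open>a + 1\<close> at every load, while the chord dominates \<open>g\<close> at all integers;
  since the chord is affine, its sum depends only on the total load, so no
  distribution does better.
\<close>

lemma concave_nat_le_chord: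
  fixes g :: "nat \<Rightarrow> real"
  assumes concave: "\<And>x x'. x \<le> x' \<Longrightarrow> g (Suc x') - g x' \<le> g (Suc x) - g x"
  shows "g z \<le> g a + (g (Suc a) - g a) * (real z - real a)"
proof (cases "a \<le> z")
  case True
  then show ?thesis
  proof (induction z rule: dec_induct)
    case (step z)
    have "g (Suc z) - g z \<le> g (Suc a) - g a" using step.hyps concave by simp
    with step.IH show ?case by (simp add: algebra_simps)
  qed simp
next
  case False
  then have "z \<le> a" by simp
  then show ?thesis
  proof (induction z rule: inc_induct)
    case (step z)
    have "g (Suc a) - g a \<le> g (Suc z) - g z" using step.hyps concave by simp
    with step.IH show ?case by (simp add: algebra_simps)
  qed simp
qed

lemma balanced_maximizes_concave_sum:
  fixes g :: "nat \<Rightarrow> real" and y z :: "nat \<Rightarrow> nat"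
  assumes concave: "\<And>x x'. x \<le> x' \<Longrightarrow> g (Suc x') - g x' \<le> g (Suc x) - g x"
    and balanced: "\<forall>i<m. \<forall>j<m. y i \<le> y j + 1"
    and same_total: "(\<Sum>l<m. z l) = (\<Sum>l<m. y l)"
  shows "(\<Sum>l<m. g (z l)) \<le> (\<Sum>l<m. g (y l))"
proof (cases "m = 0")
  case False
  define a where "a = Min (y ` {..<m})"
  define chord where "chord x = g a + (g (Suc a) - g a) * (real x - real a)" for x
  have "a \<in> y ` {..<m}"
    unfolding a_def using False by (intro Min_in) auto
  then obtain i where "i < m" "y i = a" by auto
  have on_chord: "g (y l) = chord (y l)" if "l < m" for l
  proof -
    have "a \<le> y l"
      unfolding a_def using that by simp
    moreover have "y l \<le> Suc a"
      using that balanced \<open>i < m\<close> \<open>y i = a\<close> by fastforce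
    ultimately consider "y l = a" | "y l = Suc a" by linarith
    then show ?thesis by cases (simp_all add: chord_def)
  qed
  have chord_affine: "chord x = (g a - (g (Suc a) - g a) * a) + (g (Suc a) - g a) * real x" for x
    by (simp add: chord_def algebra_simps)
  have chord_sum: "(\<Sum>l<m. chord (w l)) = real m * (g a - (g (Suc a) - g a) * a)
      + (g (Suc a) - g a) * real (\<Sum>l<m. w l)" for w :: "nat \<Rightarrow> nat"
    unfolding chord_affine by (simp add: sum.distrib sum_distrib_left)
  have "(\<Sum>l<m. g (z l)) \<le> (\<Sum>l<m. chord (z l))"
    unfolding chord_def by (intro sum_mono concave_nat_le_chord concave)
  also have "\<dots> = (\<Sum>l<m. chord (y l))"
    unfolding chord_sum same_total ..
  also have "\<dots> = (\<Sum>l<m. g (y l))"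
    using on_chord by simp
  finally show ?thesis .
qed simp

lemma concave_transfer_increases_sum:
  fixes g :: "nat \<Rightarrow> real" and y y' :: "nat \<Rightarrow> nat"
  assumes concave: "\<And>x x'. x < x' \<Longrightarrow> g (Suc x') - g x' < g (Suc x) - g x"
    and "i < m" "j < m" "y j + 2 \<le> y i"
    and "y' i = y i - 1" "y' j = Suc (y j)" "\<And>l. l < m \<Longrightarrow> l \<noteq> i \<Longrightarrow> l \<noteq> j \<Longrightarrow> y' l = y l"
  shows "(\<Sum>l<m. g (y l)) < (\<Sum>l<m. g (y' l))"
proof -
  have "i \<noteq> j" using assms by auto
  have "(\<Sum>l<m. g (y' l) - g (y l)) = (\<Sum>l\<in>{i, j}. g (y' l) - g (y l))"
    by (rule sum.mono_neutral_right) (use assms in auto)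
  also have "\<dots> = (g (Suc (y j)) - g (y j)) - (g (Suc (y i - 1)) - g (y i - 1))"
    using assms \<open>i \<noteq> j\<close> by (simp add: Suc_diff_Suc)
  also have "\<dots> > 0"
    using concave[of "y j" "y i - 1"] assms by simp
  finally show ?thesis by (simp add: sum_subtractf)
qed

definition link_throughput :: "real \<Rightarrow> real \<Rightarrow> nat \<Rightarrow> real" where
  "link_throughput \<phi> \<mu> y = \<mu> * (real y * \<phi>) / (real y * \<phi> + \<mu>)"

lemma link_throughput_increment:
  assumes "\<phi> > 0" "\<mu> > 0"
  shows "link_throughput \<phi> \<mu> (Suc x) - link_throughput \<phi> \<mu> x
    = \<mu>\<^sup>2 * \<phi> / ((real x * \<phi> + \<mu>) * (real x * \<phi> + \<phi> + \<mu>))"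
proof -
  have "real x * \<phi> + \<mu> > 0" "real x * \<phi> + \<phi> + \<mu> > 0"
    using assms by (simp_all add: add_nonneg_pos)
  then show ?thesis
    unfolding link_throughput_def by (simp add: field_simps power2_eq_square)
qed

lemma strict_mono_link_throughput:
  assumes "\<phi> > 0" "\<mu> > 0"
  shows "strict_mono (link_throughput \<phi> \<mu>)"
  unfolding strict_mono_Suc_iff
proof
  fix x
  have "real x * \<phi> + \<mu> > 0" "real x * \<phi> + \<phi> + \<mu> > 0"
    using assms by (simp_all add: add_nonneg_pos)
  then have "link_throughput \<phi> \<mu> (Suc x) - link_throughput \<phi> \<mu> x > 0"
    unfolding link_throughput_increment[OF assms] using assms by simp
  then show "link_throughput \<phi> \<mu> x < link_throughput \<phi> \<mu> (Suc x)" by simp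
qed

lemma link_throughput_increment_strict_antimono:
  assumes "\<phi> > 0" "\<mu> > 0" "x < x'"
  shows "link_throughput \<phi> \<mu> (Suc x') - link_throughput \<phi> \<mu> x'
    < link_throughput \<phi> \<mu> (Suc x) - link_throughput \<phi> \<mu> x"
proof -
  have pos: "real z * \<phi> + \<mu> > 0" "real z * \<phi> + \<phi> + \<mu> > 0" for z
    using assms by (simp_all add: add_nonneg_pos)
  have "real x * \<phi> < real x' * \<phi>"
    using assms by simp
  then have "(real x * \<phi> + \<mu>) * (real x * \<phi> + \<phi> + \<mu>) < (real x' * \<phi> + \<mu>) * (real x' * \<phi> + \<phi> + \<mu>)"
    using pos[of x] pos[of x'] by (intro mult_strict_mono) auto
  then show ?thesis
    unfolding link_throughput_increment[OF assms(1,2)]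
    using pos assms by (intro divide_strict_left_mono mult_pos_pos) auto
qed

definition routed_to :: "nat \<Rightarrow> (nat \<Rightarrow> nat) \<Rightarrow> (nat \<Rightarrow> nat \<Rightarrow> nat) \<Rightarrow> nat \<Rightarrow> (nat \<times> nat) set" where
  "routed_to m n \<sigma> i = {(j, k). j < m \<and> k < n j \<and> \<sigma> j k = i}"

definition reroute :: "(nat \<Rightarrow> nat \<Rightarrow> nat) \<Rightarrow> nat \<Rightarrow> nat \<Rightarrow> nat \<Rightarrow> nat \<Rightarrow> nat \<Rightarrow> nat" where
  "reroute \<sigma> j k t = \<sigma>(j := (\<sigma> j)(k := t))"

lemma finite_routed_to: "finite (routed_to m n \<sigma> i)"
  by (rule finite_subset[of _ "Sigma {..<m} (\<lambda>j. {..<n j})"]) (auto simp: routed_to_def)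

lemma card_routed_to:
  assumes "i < m"
  shows "card (routed_to m n \<sigma> i) = u_cnt n \<sigma> i + v_cnt m n \<sigma> i"
proof -
  let ?U = "{k. k < n i \<and> \<sigma> i k = i}"
  let ?V = "{(j, k). j < m \<and> j \<noteq> i \<and> k < n j \<and> \<sigma> j k = i}"
  have split: "routed_to m n \<sigma> i = Pair i ` ?U \<union> ?V"
    using assms by (auto simp: routed_to_def)
  have "finite ?V"
    by (rule finite_subset[OF _ finite_routed_to[of m n \<sigma> i]]) (auto simp: routed_to_def)
  then have "card (Pair i ` ?U \<union> ?V) = card (Pair i ` ?U) + card ?V"
    by (intro card_Un_disjoint) auto
  also have "card (Pair i ` ?U) = card ?U"
    by (rule card_image) (simp add: inj_on_def)
  finally show ?thesis
    unfolding split u_cnt_def v_cnt_def .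
qed

lemma sum_card_routed_to:
  assumes "valid_profile m n \<sigma>"
  shows "(\<Sum>i<m. card (routed_to m n \<sigma> i)) = (\<Sum>j<m. n j)"
proof -
  have "(\<Union>i<m. routed_to m n \<sigma> i) = Sigma {..<m} (\<lambda>j. {..<n j})"
    using assms by (auto simp: routed_to_def valid_profile_def)
  moreover have "card (\<Union>i<m. routed_to m n \<sigma> i) = (\<Sum>i<m. card (routed_to m n \<sigma> i))"
    by (intro card_UN_disjoint) (auto simp: finite_routed_to[unfolded routed_to_def] routed_to_def)
  ultimately show ?thesis by simp
qed

lemma valid_profile_reroute:
  assumes "valid_profile m n \<sigma>" "t < m"
  shows "valid_profile m n (reroute \<sigma> j k t)"
  using assms by (auto simp: valid_profile_def reroute_def)

lemma routed_to_reroute: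
  assumes "j < m" "k < n j"
  shows "routed_to m n (reroute \<sigma> j k t) i
    = (if i = t then insert (j, k) (routed_to m n \<sigma> i) else routed_to m n \<sigma> i - {(j, k)})"
  using assms by (auto simp: routed_to_def reroute_def split: if_splits)

lemma u_cnt_reroute_direct:
  assumes "k < n j" "\<sigma> j k \<noteq> j"
  shows "u_cnt n (reroute \<sigma> j k j) i = (if i = j then Suc (u_cnt n \<sigma> i) else u_cnt n \<sigma> i)"
proof -
  have "{k'. k' < n j \<and> reroute \<sigma> j k j j k' = j} = insert k {k'. k' < n j \<and> \<sigma> j k' = j}"
    using assms by (auto simp: reroute_def)
  then show ?thesis
    using assms by (simp add: u_cnt_def reroute_def)
qed

lemma u_cnt_le: "u_cnt n \<sigma> i \<le> n i"
  unfolding u_cnt_def by (rule card_mono[of "{..<n i}", simplified]) auto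

lemma all_direct_iff_counts:
  "(\<forall>j<m. \<forall>k<n j. \<sigma> j k = j) \<longleftrightarrow> (\<forall>i<m. u_cnt n \<sigma> i = n i \<and> v_cnt m n \<sigma> i = 0)"
proof
  assume direct: "\<forall>j<m. \<forall>k<n j. \<sigma> j k = j"
  show "\<forall>i<m. u_cnt n \<sigma> i = n i \<and> v_cnt m n \<sigma> i = 0"
  proof (intro allI impI conjI)
    fix i assume "i < m"
    then have "{k. k < n i \<and> \<sigma> i k = i} = {..<n i}"
      using direct by auto
    then show "u_cnt n \<sigma> i = n i"
      by (simp add: u_cnt_def)
    have "{(j, k). j < m \<and> j \<noteq> i \<and> k < n j \<and> \<sigma> j k = i} = {}"
      using direct by auto
    then show "v_cnt m n \<sigma> i = 0"
      unfolding v_cnt_def by (metis card.empty)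
  qed
next
  assume counts: "\<forall>i<m. u_cnt n \<sigma> i = n i \<and> v_cnt m n \<sigma> i = 0"
  show "\<forall>j<m. \<forall>k<n j. \<sigma> j k = j"
  proof (intro allI impI)
    fix j k assume "j < m" "k < n j"
    have "{k'. k' < n j \<and> \<sigma> j k' = j} = {..<n j}"
      using counts \<open>j < m\<close> by (intro card_subset_eq) (auto simp: u_cnt_def)
    then show "\<sigma> j k = j" using \<open>k < n j\<close> by auto
  qed
qed

lemma TR_full_loss: "TR 1 \<phi> \<mu> m n \<sigma> = (\<Sum>i<m. link_throughput \<phi> \<mu> (u_cnt n \<sigma> i))"
  by (simp add: TR_def load_def link_throughput_def)

lemma TR_no_loss: "TR 0 \<phi> \<mu> m n \<sigma> = (\<Sum>i<m. link_throughput \<phi> \<mu> (card (routed_to m n \<sigma> i)))"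
  unfolding TR_def
  by (intro sum.cong) (auto simp: load_def link_throughput_def card_routed_to algebra_simps)

lemma optimal_full_loss_iff_all_direct:
  assumes "\<phi> > 0" "\<mu> > 0" "valid_profile m n \<sigma>"
  shows "optimal 1 \<phi> \<mu> m n \<sigma> \<longleftrightarrow> (\<forall>j<m. \<forall>k<n j. \<sigma> j k = j)"
proof
  note mono = strict_mono_link_throughput[OF assms(1,2)]
  assume opt: "optimal 1 \<phi> \<mu> m n \<sigma>"
  show "\<forall>j<m. \<forall>k<n j. \<sigma> j k = j"
  proof (intro allI impI, rule ccontr)
    fix j k assume "j < m" "k < n j" "\<sigma> j k \<noteq> j"
    let ?\<tau> = "reroute \<sigma> j k j"
    note u_\<tau> = u_cnt_reroute_direct[of k n j \<sigma>, OF \<open>k < n j\<close> \<open>\<sigma> j k \<noteq> j\<close>]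
    have "TR 1 \<phi> \<mu> m n \<sigma> < TR 1 \<phi> \<mu> m n ?\<tau>"
      unfolding TR_full_loss
    proof (rule sum_strict_mono_ex1)
      show "\<forall>i\<in>{..<m}. link_throughput \<phi> \<mu> (u_cnt n \<sigma> i) \<le> link_throughput \<phi> \<mu> (u_cnt n ?\<tau> i)"
        using mono by (simp add: u_\<tau> strict_mono_less_eq)
      show "\<exists>i\<in>{..<m}. link_throughput \<phi> \<mu> (u_cnt n \<sigma> i) < link_throughput \<phi> \<mu> (u_cnt n ?\<tau> i)"
        using mono \<open>j < m\<close> by (auto simp: u_\<tau> strict_mono_less)
    qed simp
    moreover have "valid_profile m n ?\<tau>"
      using assms(3) \<open>j < m\<close> by (rule valid_profile_reroute)
    ultimately show False
      using opt by (simp add: optimal_def not_le[symmetric])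
  qed
next
  note mono = strict_mono_link_throughput[OF assms(1,2)]
  assume "\<forall>j<m. \<forall>k<n j. \<sigma> j k = j"
  then have all_direct: "u_cnt n \<sigma> i = n i" if "i < m" for i
    using that all_direct_iff_counts by blast
  show "optimal 1 \<phi> \<mu> m n \<sigma>"
    unfolding optimal_def TR_full_loss
  proof (intro conjI allI impI)
    fix \<tau> assume "valid_profile m n \<tau>"
    show "(\<Sum>i<m. link_throughput \<phi> \<mu> (u_cnt n \<tau> i)) \<le> (\<Sum>i<m. link_throughput \<phi> \<mu> (u_cnt n \<sigma> i))"
    proof (rule sum_mono)
      fix i assume "i \<in> {..<m}"
      then have "u_cnt n \<tau> i \<le> u_cnt n \<sigma> i"
        using all_direct u_cnt_le by simp
      then show "link_throughput \<phi> \<mu> (u_cnt n \<tau> i) \<le> link_throughput \<phi> \<mu> (u_cnt n \<sigma> i)"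
        using mono by (simp add: strict_mono_less_eq)
    qed
  qed (rule assms(3))
qed

lemma optimal_no_loss_iff_balanced:
  assumes "\<phi> > 0" "\<mu> > 0" "valid_profile m n \<sigma>"
  shows "optimal 0 \<phi> \<mu> m n \<sigma>
    \<longleftrightarrow> (\<forall>i<m. \<forall>j<m. card (routed_to m n \<sigma> i) \<le> card (routed_to m n \<sigma> j) + 1)"
proof
  define y where "y \<tau> i = card (routed_to m n \<tau> i)" for \<tau> i
  assume opt: "optimal 0 \<phi> \<mu> m n \<sigma>"
  show "\<forall>i<m. \<forall>j<m. card (routed_to m n \<sigma> i) \<le> card (routed_to m n \<sigma> j) + 1"
  proof (rule ccontr)
    assume "\<not> ?thesis"
    then obtain i j where "i < m" "j < m" and unbalanced: "y \<sigma> j + 2 \<le> y \<sigma> i"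
      unfolding y_def by force
    then have "routed_to m n \<sigma> i \<noteq> {}"
      unfolding y_def by auto
    then obtain j' k where user: "(j', k) \<in> routed_to m n \<sigma> i"
      by auto
    then have "j' < m" "k < n j'"
      by (auto simp: routed_to_def)
    let ?\<tau> = "reroute \<sigma> j' k j"
    note routed_\<tau> = routed_to_reroute[of j' m k n \<sigma> j, OF \<open>j' < m\<close> \<open>k < n j'\<close>]
    have "i \<noteq> j"
      using unbalanced by auto
    have "TR 0 \<phi> \<mu> m n \<sigma> < TR 0 \<phi> \<mu> m n ?\<tau>"
      unfolding TR_no_loss y_def[symmetric]
    proof (rule concave_transfer_increases_sum)
      show "y ?\<tau> i = y \<sigma> i - 1"
        using user \<open>i \<noteq> j\<close> by (simp add: y_def routed_\<tau> finite_routed_to)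
      have elsewhere: "(j', k) \<notin> routed_to m n \<sigma> l" if "l \<noteq> i" for l
        using user that by (simp add: routed_to_def)
      show "y ?\<tau> j = Suc (y \<sigma> j)"
        using elsewhere \<open>i \<noteq> j\<close> by (simp add: y_def routed_\<tau> finite_routed_to)
      show "y ?\<tau> l = y \<sigma> l" if "l \<noteq> i" "l \<noteq> j" for l
        using elsewhere that by (simp add: y_def routed_\<tau>)
    qed (use link_throughput_increment_strict_antimono assms \<open>i < m\<close> \<open>j < m\<close> unbalanced in auto)
    moreover have "valid_profile m n ?\<tau>"
      using assms(3) \<open>j < m\<close> by (rule valid_profile_reroute)
    ultimately show False
      using opt by (simp add: optimal_def not_le[symmetric])
  qed
next
  assume balanced: "\<forall>i<m. \<forall>j<m. card (routed_to m n \<sigma> i) \<le> card (routed_to m n \<sigma> j) + 1"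
  show "optimal 0 \<phi> \<mu> m n \<sigma>"
    unfolding optimal_def TR_no_loss
  proof (intro conjI allI impI)
    fix \<tau> assume "valid_profile m n \<tau>"
    show "(\<Sum>i<m. link_throughput \<phi> \<mu> (card (routed_to m n \<tau> i)))
      \<le> (\<Sum>i<m. link_throughput \<phi> \<mu> (card (routed_to m n \<sigma> i)))"
    proof (rule balanced_maximizes_concave_sum)
      show "link_throughput \<phi> \<mu> (Suc x') - link_throughput \<phi> \<mu> x'
        \<le> link_throughput \<phi> \<mu> (Suc x) - link_throughput \<phi> \<mu> x" if "x \<le> x'" for x x'
        using that link_throughput_increment_strict_antimono[OF assms(1,2), of x x'] by (auto simp: le_less)
      show "(\<Sum>i<m. card (routed_to m n \<tau> i)) = (\<Sum>i<m. card (routed_to m n \<sigma> i))"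
        using \<open>valid_profile m n \<tau>\<close> assms(3) by (simp add: sum_card_routed_to)
    qed (rule balanced)
  qed (rule assms(3))
qed

lemma pairwise_abs_diff_le_one_iff:
  fixes a :: "nat \<Rightarrow> nat"
  shows "(\<forall>i<m. \<forall>j<m. \<bar>int (a i) - int (a j)\<bar> \<le> 1) \<longleftrightarrow> (\<forall>i<m. \<forall>j<m. a i \<le> a j + 1)"
proof -
  have close: "\<bar>int x - int y\<bar> \<le> 1 \<longleftrightarrow> x \<le> y + 1 \<and> y \<le> x + 1" for x y :: nat
    by linarith
  show ?thesis
    unfolding close by blast
qed

theorem corollary1:
  fixes m :: nat and n :: "nat \<Rightarrow> nat" and \<phi> \<mu> :: real
  assumes "m \<ge> 2" and "\<phi> > 0" and "\<mu> > 0"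
  shows "(\<forall>\<sigma>. valid_profile m n \<sigma> \<longrightarrow>
            (optimal 1 \<phi> \<mu> m n \<sigma> \<longleftrightarrow>
               (\<forall>i<m. u_cnt n \<sigma> i = n i \<and> v_cnt m n \<sigma> i = 0)))
       \<and> (\<forall>\<sigma>. valid_profile m n \<sigma> \<longrightarrow>
            (optimal 0 \<phi> \<mu> m n \<sigma> \<longleftrightarrow>
               (\<forall>i<m. \<forall>j<m. \<bar>int (u_cnt n \<sigma> i + v_cnt m n \<sigma> i)
                              - int (u_cnt n \<sigma> j + v_cnt m n \<sigma> j)\<bar> \<le> 1)))"
proof (intro conjI allI impI)
  fix \<sigma> assume "valid_profile m n \<sigma>"
  then have "optimal 1 \<phi> \<mu> m n \<sigma> \<longleftrightarrow> (\<forall>j<m. \<forall>k<n j. \<sigma> j k = j)"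
    using assms(2,3) by (intro optimal_full_loss_iff_all_direct)
  also have "\<dots> \<longleftrightarrow> (\<forall>i<m. u_cnt n \<sigma> i = n i \<and> v_cnt m n \<sigma> i = 0)"
    by (rule all_direct_iff_counts)
  finally show "optimal 1 \<phi> \<mu> m n \<sigma> \<longleftrightarrow> \<dots>" .
next
  fix \<sigma> assume "valid_profile m n \<sigma>"
  then have "optimal 0 \<phi> \<mu> m n \<sigma>
      \<longleftrightarrow> (\<forall>i<m. \<forall>j<m. card (routed_to m n \<sigma> i) \<le> card (routed_to m n \<sigma> j) + 1)"
    using assms(2,3) by (intro optimal_no_loss_iff_balanced)
  also have "\<dots> \<longleftrightarrow> (\<forall>i<m. \<forall>j<m. u_cnt n \<sigma> i + v_cnt m n \<sigma> i \<le> u_cnt n \<sigma> j + v_cnt m n \<sigma> j + 1)"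
    by (simp add: card_routed_to)
  also have "\<dots> \<longleftrightarrow> (\<forall>i<m. \<forall>j<m. \<bar>int (u_cnt n \<sigma> i + v_cnt m n \<sigma> i)
                              - int (u_cnt n \<sigma> j + v_cnt m n \<sigma> j)\<bar> \<le> 1)"
    by (simp only: pairwise_abs_diff_le_one_iff)
  finally show "optimal 0 \<phi> \<mu> m n \<sigma> \<longleftrightarrow> \<dots>" .
qed

end
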